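(* Let $\mathfrak{g}_0$ be the noncompact real form of $\mathfrak{g}_2$ with $\mathfrak{k}_0=\mathfrak{su}(2)\oplus\mathfrak{su}(2)$, and let $\rho_1=(-1,-2,3)$, $\rho_2=(1,-3,2)$, $\rho_3=(2,-3,1)$. The admissible $\Theta$-stable parabolic subalgebras $\mathfrak{q}$ of $\mathfrak{g}$ with $\mathfrak{l}_0$ having no compact factors, their faces $\Phi_H$ and the sets $\Phi_H\cap C_\mathfrak{k}$ (the infinitesimal characters of the Dirac cohomology of $A_\mathfrak{q}$) are exactly: (a) the three Borel subalgebras with $\mathfrak{l}=\mathfrak{t}$, defined by $H=\rho_i$ ($i=1,2,3$), giving the discrete series, with $\Phi_H=\Phi_H\cap C_\mathfrak{k}=\{\rho_i\}$; (b) $\mathfrak{q}=\mathfrak{g}$ ($H=0$), giving the trivial module, with $\Phi_H\cap C_\mathfrak{k}=\{\rho_1,\rho_2,\rho_3\}$; (c) $\mathfrak{q}_1$ with $H=(1,-2,1)$ and $\mathfrak{l}=\mathfrak{t}\oplus\mathfrak{g}_{-\epsilon_1+\epsilon_3}\oplus\mathfrak{g}_{\epsilon_1-\epsilon_3}$, with $\Phi_1=\{(2,-3,1),(1,-3,2)\}$ and $\Phi_1\cap C_\mathfrak{k}=\{\rho_2,\rho_3\}$; (d) $\mathfrak{q}_2$ with $H=(0,-1,1)$ and $\mathfrak{l}=\mathfrak{t}\oplus\mathfrak{g}_{-2\epsilon_1+\epsilon_2+\epsilon_3}\oplus\mathfrak{g}_{2\epsilon_1-\epsilon_2-\epsilon_3}$,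 with $\Phi_2=\{(-1,-2,3),(1,-3,2)\}$ and $\Phi_2\cap C_\mathfrak{k}=\{\rho_1,\rho_2\}$. All these $A_\mathfrak{q}$ modules are distinguished by their Dirac cohomology.
   Context: Identify $i\mathfrak{t}_0\cong\mathfrak{t}^*_\mathbb{R}$ with $\{(x_1,x_2,x_3)\in\mathbb{R}^3: x_1+x_2+x_3=0\}$ via the standard inner product, $\mu(H)=\langle\mu,H\rangle$. The roots of $\mathfrak{g}_2$ are $\pm$ the standard positive roots $\epsilon_1-\epsilon_2,\ -\epsilon_1+\epsilon_3,\ -\epsilon_2+\epsilon_3,\ -2\epsilon_1+\epsilon_2+\epsilon_3,\ -\epsilon_1-\epsilon_2+2\epsilon_3,\ \epsilon_1-2\epsilon_2+\epsilon_3$; the Weyl group $W$ is dihedral of order 12. The compact roots are $\pm(\epsilon_1-\epsilon_2)$, $\pm(-\epsilon_1-\epsilon_2+2\epsilon_3)$, with $\Delta^+_\mathfrak{k}=\{\epsilon_1-\epsilon_2,-\epsilon_1-\epsilon_2+2\epsilon_3\}$; so $H$ is $\mathfrak{k}$-dominant iff $H_2\leq H_1\leq -H_2$, and $C_\mathfrak{k}$ is this chamber. $\rho_1,\rho_2,\rho_3$ are the half sums of positive roots of the three positive systems containing $\Delta^+_\mathfrak{k}$ ($\rho_1$ for the standard one); $\rho=\rho_1$. For $H$: $\mathfrak{l}=\mathfrak{t}\oplus\bigoplus_{\alpha(H)=0}\mathfrak{g}_\alpha$, $\mathfrak{u}=\bigoplus_{\alpha(H)>0}\mathfrak{g}_\alpha$,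 $\mathfrak{q}=\mathfrak{l}\oplus\mathfrak{u}$, admissible if $H$ is $\mathfrak{k}$-dominant; $\mathfrak{l}_0=\mathfrak{l}\cap\mathfrak{g}_0$, "no compact factors" means no compact simple ideal. Face $\Phi_H=\{\mu\in W\rho:\mu(H)\geq\nu(H)\ \forall\nu\in W\rho\}$. $A_\mathfrak{q}=A_\mathfrak{q}(0)$ Vogan–Zuckerman module; its Dirac cohomology consists of $\widetilde K$-types with infinitesimal characters in $\Phi_H\cap C_\mathfrak{k}$. *)

theory Defs
  imports "HOL-Analysis.Analysis"
begin

text \<open>The real dual of the compact Cartan subalgebra, identified with the
plane x1+x2+x3 = 0 in R^3 via the standard inner product.\<close>

definition v3 :: "real \<Rightarrow> real \<Rightarrow> real \<Rightarrow> real^3" where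
  "v3 a b c = vector [a, b, c]"

definition tplane :: "(real^3) set" where
  "tplane = {x. x $ 1 + x $ 2 + x $ 3 = 0}"

definition pos_roots :: "(real^3) set" where
  "pos_roots = {v3 1 (-1) 0, v3 (-1) 0 1, v3 0 (-1) 1, v3 (-2) 1 1,
                v3 (-1) (-1) 2, v3 1 (-2) 1}"

definition roots :: "(real^3) set" where
  "roots = pos_roots \<union> uminus ` pos_roots"

definition compact_roots :: "(real^3) set" where
  "compact_roots = {v3 1 (-1) 0, v3 (-1) 1 0, v3 (-1) (-1) 2, v3 1 1 (-2)}"

definition pos_k_roots :: "(real^3) set" where
  "pos_k_roots = {v3 1 (-1) 0, v3 (-1) (-1) 2}"

definition k_dominant :: "real^3 \<Rightarrow> bool" where
  "k_dominant H \<longleftrightarrow> (\<forall>\<alpha>\<in>pos_k_roots. \<alpha> \<bullet> H \<ge> 0)"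

definition C_k :: "(real^3) set" where
  "C_k = {x \<in> tplane. k_dominant x}"

definition rho :: "real^3" where
  "rho = (1/2) *\<^sub>R (\<Sum>\<alpha>\<in>pos_roots. \<alpha>)"

definition refl :: "real^3 \<Rightarrow> real^3 \<Rightarrow> real^3" where
  "refl \<alpha> x = x - (2 * (x \<bullet> \<alpha>) / (\<alpha> \<bullet> \<alpha>)) *\<^sub>R \<alpha>"

inductive_set W_orbit :: "real^3 \<Rightarrow> (real^3) set" for v where
  base: "v \<in> W_orbit v"
| step: "x \<in> W_orbit v \<Longrightarrow> \<alpha> \<in> roots \<Longrightarrow> refl \<alpha> x \<in> W_orbit v"

definition W_rho :: "(real^3) set" where
  "W_rho = W_orbit rho"

text \<open>Theta-stable parabolic q = l + u defined by H, recorded by its root data: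
roots of l (alpha(H) = 0), of u (alpha(H) > 0); q itself is determined by the
set of roots alpha with alpha(H) >= 0.\<close>
definition l_roots :: "real^3 \<Rightarrow> (real^3) set" where
  "l_roots H = {\<alpha> \<in> roots. \<alpha> \<bullet> H = 0}"

definition u_roots :: "real^3 \<Rightarrow> (real^3) set" where
  "u_roots H = {\<alpha> \<in> roots. \<alpha> \<bullet> H > 0}"

definition q_roots :: "real^3 \<Rightarrow> (real^3) set" where
  "q_roots H = {\<alpha> \<in> roots. \<alpha> \<bullet> H \<ge> 0}"

definition admissible :: "real^3 \<Rightarrow> bool" where
  "admissible H \<longleftrightarrow> H \<in> tplane \<and> k_dominant H"

text \<open>Simple ideals of [l,l] correspond to irreducible components of the root
system of l: minimal nonempty subsets orthogonal to the rest.  Such an ideal of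
l_0 is compact iff all its roots are compact.\<close>
definition orth_closed :: "(real^3) set \<Rightarrow> (real^3) set \<Rightarrow> bool" where
  "orth_closed R S \<longleftrightarrow> S \<noteq> {} \<and> S \<subseteq> R \<and> (\<forall>\<alpha>\<in>S. \<forall>\<beta>\<in>R - S. \<alpha> \<bullet> \<beta> = 0)"

definition irred_component :: "(real^3) set \<Rightarrow> (real^3) set \<Rightarrow> bool" where
  "irred_component R S \<longleftrightarrow> orth_closed R S \<and> (\<forall>S'. S' \<subset> S \<longrightarrow> \<not> orth_closed R S')"

definition no_compact_factors :: "real^3 \<Rightarrow> bool" where
  "no_compact_factors H \<longleftrightarrow>
     \<not> (\<exists>S. irred_component (l_roots H) S \<and> S \<subseteq> compact_roots)"

definition face :: "real^3 \<Rightarrow> (real^3) set" where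
  "face H = {\<mu> \<in> W_rho. \<forall>\<nu>\<in>W_rho. \<mu> \<bullet> H \<ge> \<nu> \<bullet> H}"

end

theory Submission
  imports Defs
begin

text \<open>On the plane $x_1 + x_2 + x_3 = 0$ the reflections in the short roots of $G_2$ are the
transpositions of coordinates and those in the long roots are negated transpositions, so the
Weyl group acts by signed permutations and $W\rho$ consists of the twelve signed permutations
of $(-1,-2,3)$.  The $\mathfrak{k}$-dominant chamber is cut by the root hyperplanes into finitely
many cells; $\mathfrak{q}$ only depends on the cell of $H$, the cells on the walls of the chamber
(which are compact root hyperplanes) give a compact $\mathfrak{su}(2)$ factor in $\mathfrak{l}_0$,
and the remaining cells give the six listed parabolics.\<close>

lemma v3_nth [simp]: "v3 a b c $ 1 = a" "v3 a b c $ 2 = b" "v3 a b c $ 3 = c"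
  by (simp_all add: v3_def)

lemma v3_eq_iff [simp]: "v3 a b c = v3 a' b' c' \<longleftrightarrow> a = a' \<and> b = b' \<and> c = c'"
  by (auto simp: vec_eq_iff forall_3)

lemma v3_cases: obtains a b c where "x = v3 a b c"
  using that[of "x$1" "x$2" "x$3"] by (simp add: vec_eq_iff forall_3)

lemma inner_v3 [simp]: "v3 a b c \<bullet> v3 x y z = a*x + b*y + c*z"
  by (simp add: inner_vec_def sum_3)

lemma uminus_v3 [simp]: "- v3 a b c = v3 (-a) (-b) (-c)"
  by (simp add: vec_eq_iff forall_3)

lemma zero_eq_v3: "(0::real^3) = v3 0 0 0"
  by (simp add: vec_eq_iff forall_3)

lemma add_v3 [simp]: "v3 a b c + v3 x y z = v3 (a+x) (b+y) (c+z)"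
  by (simp add: vec_eq_iff forall_3)

lemma scaleR_v3 [simp]: "r *\<^sub>R v3 a b c = v3 (r*a) (r*b) (r*c)"
  by (simp add: vec_eq_iff forall_3)

lemma refl_uminus [simp]: "refl (-\<alpha>) = refl \<alpha>"
  by (simp add: refl_def fun_eq_iff)

lemma refl_short_roots:
  "refl (v3 1 (-1) 0) (v3 x y z) = v3 y x z"
  "refl (v3 (-1) 0 1) (v3 x y z) = v3 z y x"
  "refl (v3 0 (-1) 1) (v3 x y z) = v3 x z y"
  by (simp_all add: refl_def vec_eq_iff forall_3 field_simps)

lemma refl_long_roots:
  assumes "x + y + z = 0"
  shows "refl (v3 (-2) 1 1) (v3 x y z) = v3 (-x) (-z) (-y)"
    and "refl (v3 (-1) (-1) 2) (v3 x y z) = v3 (-y) (-x) (-z)"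
    and "refl (v3 1 (-2) 1) (v3 x y z) = v3 (-z) (-y) (-x)"
  using assms by (auto simp: refl_def vec_eq_iff forall_3 field_simps)

lemma roots_eq: "roots = {v3 1 (-1) 0, v3 (-1) 0 1, v3 0 (-1) 1, v3 (-2) 1 1,
    v3 (-1) (-1) 2, v3 1 (-2) 1, v3 (-1) 1 0, v3 1 0 (-1), v3 0 1 (-1), v3 2 (-1) (-1),
    v3 1 1 (-2), v3 (-1) 2 (-1)}"
  by (simp add: roots_def pos_roots_def insert_commute)

lemma roots_reflections:
  assumes "\<alpha> \<in> roots"
  obtains \<beta> where "\<beta> \<in> pos_roots" "refl \<alpha> = refl \<beta>"
proof -
  from assms consider "\<alpha> \<in> pos_roots" | \<beta> where "\<beta> \<in> pos_roots" "\<alpha> = -\<beta>"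
    unfolding roots_def by blast
  then show thesis using that by cases auto
qed

definition perms3 :: "real \<Rightarrow> real \<Rightarrow> real \<Rightarrow> (real^3) set" where
  "perms3 a b c = {v3 a b c, v3 a c b, v3 b a c, v3 b c a, v3 c a b, v3 c b a}"

definition signed_perms3 :: "real \<Rightarrow> real \<Rightarrow> real \<Rightarrow> (real^3) set" where
  "signed_perms3 a b c = perms3 a b c \<union> uminus ` perms3 a b c"

lemma W_orbit_subset_signed_perms3:
  assumes "a + b + c = 0"
  shows "W_orbit (v3 a b c) \<subseteq> signed_perms3 a b c"
proof
  fix x assume "x \<in> W_orbit (v3 a b c)"
  then show "x \<in> signed_perms3 a b c"
  proof induction
    case base
    then show ?case by (simp add: signed_perms3_def perms3_def)
  next
    case (step x \<alpha>)
    obtain \<beta> where \<beta>: "\<beta> \<in> pos_roots" "refl \<alpha> = refl \<beta>"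
      using step.hyps(2) by (rule roots_reflections)
    have c: "c = - a - b" using assms by linarith
    from step.IH \<beta>(1) show ?case
      unfolding \<beta>(2) signed_perms3_def perms3_def pos_roots_def c
      by (elim UnE imageE insertE emptyE; simp add: refl_short_roots refl_long_roots)
  qed
qed

lemma W_orbit_transpositions:
  assumes "v3 x y z \<in> W_orbit v"
  shows "v3 y x z \<in> W_orbit v" "v3 z y x \<in> W_orbit v" "v3 x z y \<in> W_orbit v"
  using W_orbit.step[OF assms, of "v3 1 (-1) 0"] W_orbit.step[OF assms, of "v3 (-1) 0 1"]
    W_orbit.step[OF assms, of "v3 0 (-1) 1"]
  by (simp_all add: refl_short_roots roots_def pos_roots_def)

lemma W_orbit_uminus:
  assumes "v3 x y z \<in> W_orbit v" "x + y + z = 0"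
  shows "v3 (-x) (-y) (-z) \<in> W_orbit v"
proof -
  have "refl (v3 (-2) 1 1) (v3 x z y) \<in> W_orbit v"
    using W_orbit_transpositions(3)[OF assms(1)]
    by (rule W_orbit.step) (simp add: roots_def pos_roots_def)
  then show ?thesis using assms(2) by (simp add: refl_long_roots)
qed

lemma signed_perms3_subset_W_orbit:
  assumes "a + b + c = 0"
  shows "signed_perms3 a b c \<subseteq> W_orbit (v3 a b c)"
proof -
  have "v3 a b c \<in> W_orbit (v3 a b c)" by (rule W_orbit.base)
  then have perms: "perms3 a b c \<subseteq> W_orbit (v3 a b c)"
    unfolding perms3_def by (meson W_orbit_transpositions empty_subsetI insert_subsetI)
  then have "uminus ` perms3 a b c \<subseteq> W_orbit (v3 a b c)"
    using assms unfolding perms3_def by (auto intro!: W_orbit_uminus simp: algebra_simps)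
  with perms show ?thesis by (simp add: signed_perms3_def)
qed

lemma W_orbit_eq_signed_perms3: "a + b + c = 0 \<Longrightarrow> W_orbit (v3 a b c) = signed_perms3 a b c"
  using W_orbit_subset_signed_perms3 signed_perms3_subset_W_orbit by blast

lemma rho_eq: "rho = v3 (-1) (-2) 3"
  by (simp add: rho_def pos_roots_def zero_eq_v3)

lemma W_rho_eq: "W_rho = signed_perms3 (-1) (-2) 3"
  by (simp add: W_rho_def rho_eq W_orbit_eq_signed_perms3)

lemma mem_C_k_v3: "v3 a b c \<in> C_k \<longleftrightarrow> a + b + c = 0 \<and> b \<le> a \<and> a + b \<le> 2 * c"
  by (auto simp: C_k_def tplane_def k_dominant_def pos_k_roots_def)

lemma admissible_iff_mem_C_k: "admissible H \<longleftrightarrow> H \<in> C_k"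
  by (simp add: admissible_def C_k_def)

lemma W_rho_Int_C_k: "W_rho \<inter> C_k = {v3 (-1) (-2) 3, v3 1 (-3) 2, v3 2 (-3) 1}"
  by (auto simp: W_rho_eq signed_perms3_def perms3_def mem_C_k_v3)

lemma face_0: "face 0 = W_rho"
  by (simp add: face_def)

lemma face_eqs:
  "face (v3 (-1) (-2) 3) = {v3 (-1) (-2) 3}"
  "face (v3 1 (-3) 2) = {v3 1 (-3) 2}"
  "face (v3 2 (-3) 1) = {v3 2 (-3) 1}"
  "face (v3 1 (-2) 1) = {v3 2 (-3) 1, v3 1 (-3) 2}"
  "face (v3 0 (-1) 1) = {v3 (-1) (-2) 3, v3 1 (-3) 2}"
  by (auto simp: face_def W_rho_eq signed_perms3_def perms3_def)

lemma face_Int_C_k_eqs: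
  "face (v3 (-1) (-2) 3) \<inter> C_k = {v3 (-1) (-2) 3}"
  "face (v3 1 (-3) 2) \<inter> C_k = {v3 1 (-3) 2}"
  "face (v3 2 (-3) 1) \<inter> C_k = {v3 2 (-3) 1}"
  "face 0 \<inter> C_k = {v3 (-1) (-2) 3, v3 1 (-3) 2, v3 2 (-3) 1}"
  "face (v3 1 (-2) 1) \<inter> C_k = {v3 1 (-3) 2, v3 2 (-3) 1}"
  "face (v3 0 (-1) 1) \<inter> C_k = {v3 (-1) (-2) 3, v3 1 (-3) 2}"
  by (simp_all add: face_eqs face_0 W_rho_Int_C_k mem_C_k_v3 Int_insert_left doubleton_eq_iff)

lemma l_roots_eqs:
  "l_roots (v3 (-1) (-2) 3) = {}"
  "l_roots (v3 1 (-3) 2) = {}"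
  "l_roots (v3 2 (-3) 1) = {}"
  "l_roots 0 = roots"
  "l_roots (v3 1 (-2) 1) = {v3 (-1) 0 1, v3 1 0 (-1)}"
  "l_roots (v3 0 (-1) 1) = {v3 (-2) 1 1, v3 2 (-1) (-1)}"
  by (auto simp: l_roots_def roots_eq)

lemma q_roots_eq_iff: "q_roots H = q_roots H' \<longleftrightarrow> (\<forall>\<alpha>\<in>roots. 0 \<le> \<alpha> \<bullet> H \<longleftrightarrow> 0 \<le> \<alpha> \<bullet> H')"
  by (auto simp: q_roots_def set_eq_iff)

lemma card_eq_if_card_image_eq:
  assumes "finite A" "card (f ` A) = n" "card A \<le> n"
  shows "card A = n"
  using card_image_le[OF assms(1), of f] assms(2,3) by linarith

lemma no_compact_factors_if_l_roots_noncompact: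
  assumes "l_roots H \<inter> compact_roots = {}"
  shows "no_compact_factors H"
proof -
  have "\<not> S \<subseteq> compact_roots" if "irred_component (l_roots H) S" for S
    using that assms unfolding irred_component_def orth_closed_def by blast
  then show ?thesis unfolding no_compact_factors_def by blast
qed

lemma irred_component_root_pair:
  assumes "r \<noteq> 0"
  shows "irred_component {r, -r} {r, -r}"
proof -
  have nonorth: "\<forall>x\<in>{r, -r}. \<forall>y\<in>{r, -r}. x \<bullet> y \<noteq> 0" using assms by simp
  have "\<not> orth_closed {r, -r} S" if psub: "S \<subset> {r, -r}" for S
  proof
    assume S: "orth_closed {r, -r} S"
    then obtain x where "x \<in> S" unfolding orth_closed_def by auto
    moreover obtain y where "y \<in> {r, -r} - S" using psubset_imp_ex_mem[OF psub] by blast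
    ultimately show False using S nonorth unfolding orth_closed_def by blast
  qed
  moreover have "orth_closed {r, -r} {r, -r}" by (simp add: orth_closed_def)
  ultimately show ?thesis unfolding irred_component_def by blast
qed

lemma compact_factor_if_l_roots_compact_pair:
  assumes "l_roots H = {r, -r}" "r \<in> compact_roots" "-r \<in> compact_roots" "r \<noteq> 0"
  shows "\<not> no_compact_factors H"
  using irred_component_root_pair[OF assms(4)] assms(1-3) unfolding no_compact_factors_def by auto

lemma compact_root_nonorth_noncompact:
  assumes "\<alpha> \<in> compact_roots"
  shows "\<exists>\<beta>\<in>roots - compact_roots. \<alpha> \<bullet> \<beta> \<noteq> 0"
proof -
  have "v3 (-1) 0 1 \<in> roots - compact_roots" by (simp add: roots_eq compact_roots_def)
  moreover have "\<alpha> \<bullet> v3 (-1) 0 1 \<noteq> 0" using assms by (auto simp: compact_roots_def)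
  ultimately show ?thesis by blast
qed

lemma no_compact_factors_0: "no_compact_factors 0"
proof -
  have "\<not> S \<subseteq> compact_roots" if oc: "orth_closed roots S" for S
  proof
    assume "S \<subseteq> compact_roots"
    moreover obtain \<alpha> where "\<alpha> \<in> S" using oc unfolding orth_closed_def by auto
    ultimately obtain \<beta> where "\<beta> \<in> roots - compact_roots" "\<alpha> \<bullet> \<beta> \<noteq> 0"
      using compact_root_nonorth_noncompact by blast
    with \<open>\<alpha> \<in> S\<close> \<open>S \<subseteq> compact_roots\<close> oc show False unfolding orth_closed_def by blast
  qed
  then show ?thesis by (auto simp: no_compact_factors_def irred_component_def l_roots_eqs(4))
qed

lemma admissible_no_compact_factors_q_roots:
  assumes "admissible H" "no_compact_factors H"
  shows "q_roots H \<in> q_roots ` {v3 (-1) (-2) 3, v3 1 (-3) 2, v3 2 (-3) 1, 0, v3 1 (-2) 1, v3 0 (-1) 1}"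
proof -
  obtain a b c where H: "H = v3 a b c" by (rule v3_cases)
  have c: "c = - a - b" and "b \<le> a" "a \<le> - b"
    using assms(1) by (auto simp: H admissible_iff_mem_C_k mem_C_k_v3)
  \<comment> \<open>The walls $a = 0$ and $2a = -b$ (roots $-2\epsilon_1+\epsilon_2+\epsilon_3$ and
    $-\epsilon_1+\epsilon_3$) split the chamber $b \<le> a \<le> -b$ into the Weyl chambers of
    $\rho_1, \rho_2, \rho_3$; its own walls $a = b$ and $a = -b$ are compact root hyperplanes.\<close>
  then consider "a = 0" "b = 0" | "a = b" "b < 0" | "a = - b" "b < 0" | "b < a" "a < 0"
    | "a = 0" "b < 0" | "0 < a" "2 * a < - b" | "0 < a" "2 * a = - b" | "- b < 2 * a" "a < - b"
    by linarith
  then show ?thesis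
  proof cases
    case 1
    then show ?thesis by (simp add: H c zero_eq_v3)
  next
    case 2
    then have "l_roots H = {v3 1 (-1) 0, - v3 1 (-1) 0}" by (auto simp: H c l_roots_def roots_eq)
    then have "\<not> no_compact_factors H"
      by (rule compact_factor_if_l_roots_compact_pair) (simp_all add: compact_roots_def zero_eq_v3)
    with assms(2) show ?thesis by contradiction
  next
    case 3
    then have "l_roots H = {v3 (-1) (-1) 2, - v3 (-1) (-1) 2}" by (auto simp: H c l_roots_def roots_eq)
    then have "\<not> no_compact_factors H"
      by (rule compact_factor_if_l_roots_compact_pair) (simp_all add: compact_roots_def zero_eq_v3)
    with assms(2) show ?thesis by contradiction
  next
    case 4
    then have "q_roots H = q_roots (v3 (-1) (-2) 3)" by (auto simp: H c q_roots_eq_iff roots_eq)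
    then show ?thesis by simp
  next
    case 5
    then have "q_roots H = q_roots (v3 0 (-1) 1)" by (auto simp: H c q_roots_eq_iff roots_eq)
    then show ?thesis by simp
  next
    case 6
    then have "q_roots H = q_roots (v3 1 (-3) 2)" by (auto simp: H c q_roots_eq_iff roots_eq)
    then show ?thesis by simp
  next
    case 7
    then have "q_roots H = q_roots (v3 1 (-2) 1)" by (auto simp: H c q_roots_eq_iff roots_eq)
    then show ?thesis by simp
  next
    case 8
    then have "q_roots H = q_roots (v3 2 (-3) 1)" by (auto simp: H c q_roots_eq_iff roots_eq)
    then show ?thesis by simp
  qed
qed

theorem theorem6p1:
  defines "\<rho>1 \<equiv> v3 (-1) (-2) 3" and "\<rho>2 \<equiv> v3 1 (-3) 2" and "\<rho>3 \<equiv> v3 2 (-3) 1"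
      and "H1 \<equiv> v3 1 (-2) 1" and "H2 \<equiv> v3 0 (-1) 1"
  shows "rho = \<rho>1
    \<and> {q_roots H | H. admissible H \<and> no_compact_factors H}
        = {q_roots \<rho>1, q_roots \<rho>2, q_roots \<rho>3, q_roots 0, q_roots H1, q_roots H2}
    \<and> card {q_roots \<rho>1, q_roots \<rho>2, q_roots \<rho>3, q_roots 0, q_roots H1, q_roots H2} = 6
    \<and> (\<forall>H\<in>{\<rho>1, \<rho>2, \<rho>3, 0, H1, H2}. admissible H \<and> no_compact_factors H)
    \<and> (\<forall>r\<in>{\<rho>1, \<rho>2, \<rho>3}. l_roots r = {} \<and> face r = {r} \<and> face r \<inter> C_k = {r})
    \<and> l_roots 0 = roots \<and> face 0 \<inter> C_k = {\<rho>1, \<rho>2, \<rho>3}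
    \<and> l_roots H1 = {v3 (-1) 0 1, v3 1 0 (-1)}
    \<and> face H1 = {v3 2 (-3) 1, v3 1 (-3) 2} \<and> face H1 \<inter> C_k = {\<rho>2, \<rho>3}
    \<and> l_roots H2 = {v3 (-2) 1 1, v3 2 (-1) (-1)}
    \<and> face H2 = {v3 (-1) (-2) 3, v3 1 (-3) 2} \<and> face H2 \<inter> C_k = {\<rho>1, \<rho>2}
    \<and> card ((\<lambda>H. face H \<inter> C_k) ` {\<rho>1, \<rho>2, \<rho>3, 0, H1, H2}) = 6"
proof -
  let ?Hs = "{v3 (-1) (-2) 3, v3 1 (-3) 2, v3 2 (-3) 1, 0, v3 1 (-2) 1, v3 0 (-1) 1}"
  have admissible: "\<forall>H\<in>?Hs. admissible H"
    by (simp add: admissible_iff_mem_C_k mem_C_k_v3 zero_eq_v3)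
  have no_compact: "\<forall>H\<in>?Hs. no_compact_factors H"
    using no_compact_factors_0
    by (auto intro!: no_compact_factors_if_l_roots_noncompact simp: l_roots_eqs compact_roots_def)
  have parabolics: "{q_roots H | H. admissible H \<and> no_compact_factors H} = q_roots ` ?Hs"
    using admissible_no_compact_factors_q_roots admissible no_compact by blast
  have "card (q_roots ` ?Hs) = 6"
    by (simp add: q_roots_eq_iff roots_eq zero_eq_v3)
  \<comment> \<open>The six sets are told apart by which of $\rho_1, \rho_2, \rho_3$ they contain.\<close>
  moreover have "card ((\<lambda>H. face H \<inter> C_k) ` ?Hs) = 6"
    by (rule card_eq_if_card_image_eq[where
          f = "\<lambda>S. (v3 (-1) (-2) 3 \<in> S, v3 1 (-3) 2 \<in> S, v3 2 (-3) 1 \<in> S)"])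
      (simp_all add: face_Int_C_k_eqs card_insert_le_m1)
  ultimately show ?thesis
    unfolding \<rho>1_def \<rho>2_def \<rho>3_def H1_def H2_def face_Int_C_k_eqs
    using admissible no_compact parabolics
    by (simp add: rho_eq l_roots_eqs face_eqs mem_C_k_v3 Int_insert_left)
qed

end
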